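(* Let $n\ge4$ and consider $n$ agents with private types $t_i\in[0,\infty)$ and valuations $v_i(t_i,S)=|S|\cdot t_i$ for winning sets $S\ni i$ (and $0$ if $i\notin S$), and suppose the seller incurs a cost of $n$ for each copy of the good sold, so the seller's profit from winning set $S$ with prices $(p_i)_{i\in S}$ is $\sum_{i\in S}p_i-n|S|$. Then for every constant $L\ge1$ there is no universally truthful mechanism whose expected profit is at least $\frac1L\mathcal{F}^{(3)}_{\mathrm{cost}}(t)$ for every $t\in[0,\infty)^n$, where $\mathcal{F}^{(3)}_{\mathrm{cost}}(t)=\max\{(c-n)|S| : c\ge0,\ S\subseteq[n],\ |S|\ge3,\ v_i(t_i,S)\ge c\ \forall i\in S\}$. In particular, with a positive per-copy cost the competitive ratio can be unbounded.
   Context: A deterministic mechanism maps reported types to a winning set $S$ and prices $p_i$ for $i\in S$ (losers pay $0$); agent utility is $v_i(t_i,S)-p_i$ if $i\in S$, else $0$. It is truthful if reporting the true type maximizes every agent's utility for all fixed reports of the others, and individually rational if truthful agents get nonnegative utility. A universally truthful mechanism is a probability distribution over deterministic truthful, individually rational mechanisms. *)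

theory Defs
  imports "HOL-Probability.Probability"
begin

text \<open>A deterministic mechanism maps a
reported profile to a winning set and a price vector (prices of losers are
irrelevant: losers pay 0).\<close>

type_synonym mechanism = "(nat \<Rightarrow> real) \<Rightarrow> nat set \<times> (nat \<Rightarrow> real)"

definition valid_profile :: "nat \<Rightarrow> (nat \<Rightarrow> real) \<Rightarrow> bool" where
  "valid_profile n t \<longleftrightarrow> (\<forall>j<n. t j \<ge> 0)"

definition valuation :: "nat \<Rightarrow> real \<Rightarrow> nat set \<Rightarrow> real" where
  "valuation i ti S = (if i \<in> S then real (card S) * ti else 0)"

definition utility :: "nat \<Rightarrow> real \<Rightarrow> nat set \<times> (nat \<Rightarrow> real) \<Rightarrow> real" where
  "utility i ti out = (if i \<in> fst out then valuation i ti (fst out) - snd out i else 0)"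

definition truthful :: "nat \<Rightarrow> mechanism \<Rightarrow> bool" where
  "truthful n M \<longleftrightarrow>
     (\<forall>t i x. valid_profile n t \<and> i < n \<and> x \<ge> 0 \<longrightarrow>
        utility i (t i) (M (t(i := x))) \<le> utility i (t i) (M t))"

definition indiv_rational :: "nat \<Rightarrow> mechanism \<Rightarrow> bool" where
  "indiv_rational n M \<longleftrightarrow>
     (\<forall>t i. valid_profile n t \<and> i < n \<longrightarrow> utility i (t i) (M t) \<ge> 0)"

definition det_mechanism :: "nat \<Rightarrow> mechanism \<Rightarrow> bool" where
  "det_mechanism n M \<longleftrightarrow> (\<forall>t. valid_profile n t \<longrightarrow> fst (M t) \<subseteq> {..<n})"

definition profit_cost :: "nat \<Rightarrow> nat set \<times> (nat \<Rightarrow> real) \<Rightarrow> real" where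
  "profit_cost n out = (\<Sum>i\<in>fst out. snd out i) - real n * real (card (fst out))"

definition F3_cost :: "nat \<Rightarrow> (nat \<Rightarrow> real) \<Rightarrow> real" where
  "F3_cost n t = Sup {(c - real n) * real (card S) | c S.
       c \<ge> 0 \<and> S \<subseteq> {..<n} \<and> card S \<ge> 3 \<and> (\<forall>i\<in>S. valuation i (t i) S \<ge> c)}"

end

theory Submission
  imports Defs
begin

text \<open>Let all types lie in \<open>[1, 1 + a]\<close> with \<open>n a \<le> 1/2\<close>. Then selling to fewer than \<open>n\<close>
  agents never pays (a nonempty partial sale loses at least \<open>1/2\<close>), while a full sale earns at most
  \<open>n\<^sup>2 a\<close>, which is what \<open>F3_cost\<close> asks for at the uniform profile \<open>1 + a\<close>. In a full sale
  truthfulness caps agent \<open>i\<close>'s price at \<open>n (1 + b)\<close> whenever lowering its report to \<open>1 + b\<close>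
  keeps the sale full; so to earn \<open>n\<^sup>2 a / L\<close> with \<open>b = a / (2 L)\<close> the mechanism must often lose the
  full sale when a single report drops to \<open>1 + b\<close>. Since winners stay winners when they raise their
  reports, such a loss forces a partial sale on some profile between the uniform profiles \<open>1 + b\<close>
  and \<open>1 + a\<close>, unless the full sale at \<open>1 + b\<close> is already lost. Along the geometric sequence
  \<open>a\<^sub>j = m (2 L)\<^sup>-\<^sup>j\<close> these last events telescope, and \<open>K\<close> steps give
  \<open>K n / L \<le> K n / (2 L) + 2 n\<close>, impossible for \<open>K > 4 L\<close>.\<close>

definition full_sale :: "nat \<Rightarrow> nat set \<times> (nat \<Rightarrow> real) \<Rightarrow> bool" where
  "full_sale n out \<longleftrightarrow> fst out = {..<n}"

definition partial_sale :: "nat \<Rightarrow> nat set \<times> (nat \<Rightarrow> real) \<Rightarrow> bool" where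
  "partial_sale n out \<longleftrightarrow> fst out \<noteq> {} \<and> fst out \<noteq> {..<n}"

definition uniform_profile :: "nat \<Rightarrow> real \<Rightarrow> nat \<Rightarrow> real" where
  "uniform_profile n x j = (if j < n then x else 0)"

definition hybrid_profile :: "(nat \<Rightarrow> real) \<Rightarrow> (nat \<Rightarrow> real) \<Rightarrow> nat \<Rightarrow> nat \<Rightarrow> real" where
  "hybrid_profile c d k j = (if j < k then d j else c j)"

lemma utility_winner: "i \<in> fst out \<Longrightarrow> utility i ti out = real (card (fst out)) * ti - snd out i"
  by (simp add: utility_def valuation_def)

lemma utility_loser: "i \<notin> fst out \<Longrightarrow> utility i ti out = 0"
  by (simp add: utility_def)

lemma valid_profile_upd: "valid_profile n t \<Longrightarrow> x \<ge> 0 \<Longrightarrow> valid_profile n (t(i := x))"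
  by (simp add: valid_profile_def)

lemma valid_uniform_profile: "0 \<le> x \<Longrightarrow> valid_profile n (uniform_profile n x)"
  by (simp add: valid_profile_def uniform_profile_def)

lemma finite_winners: "det_mechanism n M \<Longrightarrow> valid_profile n t \<Longrightarrow> finite (fst (M t))"
  by (meson det_mechanism_def finite_lessThan finite_subset)

lemma truthful_winner_mono:
  assumes tr: "truthful n M" and dm: "det_mechanism n M" and v: "valid_profile n t"
    and i: "i < n" and win: "i \<in> fst (M t)" and y: "t i \<le> y"
  shows "i \<in> fst (M (t(i := y)))"
proof (rule ccontr)
  assume lose: "i \<notin> fst (M (t(i := y)))"
  let ?S = "fst (M t)" and ?p = "snd (M t) i"
  have ti: "0 \<le> t i" and y0: "0 \<le> y" using v i y by (auto simp: valid_profile_def)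
  have "y \<noteq> t i" using lose win by (metis fun_upd_triv)
  with y have ylt: "t i < y" by linarith
  from win finite_winners[OF dm v] have card_pos: "0 < card ?S" by (auto simp: card_gt_0_iff)
  have "utility i (t i) (M (t(i := y))) \<le> utility i (t i) (M t)"
    using tr v i y0 by (simp add: truthful_def)
  hence low: "0 \<le> real (card ?S) * t i - ?p" using lose win by (simp add: utility_winner utility_loser)
  have "utility i y (M ((t(i := y))(i := t i))) \<le> utility i y (M (t(i := y)))"
    using tr valid_profile_upd[OF v y0] i ti unfolding truthful_def by (metis fun_upd_same)
  hence high: "real (card ?S) * y - ?p \<le> 0" using lose win by (simp add: utility_winner utility_loser)
  have "real (card ?S) * t i < real (card ?S) * y" using card_pos ylt by simp
  with low high show False by linarith
qed

lemma full_sale_price_le: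
  assumes tr: "truthful n M" and ir: "indiv_rational n M" and v: "valid_profile n t"
    and i: "i < n" and x: "0 \<le> x"
    and full: "full_sale n (M t)" and full': "full_sale n (M (t(i := x)))"
  shows "snd (M t) i \<le> real n * x"
proof -
  have v': "valid_profile n (t(i := x))" using valid_profile_upd[OF v x] .
  have "utility i (t i) (M (t(i := x))) \<le> utility i (t i) (M t)"
    using tr v i x by (simp add: truthful_def)
  hence "snd (M t) i \<le> snd (M (t(i := x))) i"
    using full full' i by (simp add: utility_winner full_sale_def)
  moreover have "utility i x (M (t(i := x))) \<ge> 0"
    using ir v' i unfolding indiv_rational_def by (metis fun_upd_same)
  hence "snd (M (t(i := x))) i \<le> real n * x"
    using full' i by (simp add: utility_winner full_sale_def)
  ultimately show ?thesis by linarith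
qed

lemma profit_cost_le_card:
  assumes dm: "det_mechanism n M" and ir: "indiv_rational n M" and v: "valid_profile n t"
    and hi: "\<forall>i<n. t i \<le> h"
  shows "profit_cost n (M t) \<le> real (card (fst (M t))) * (real (card (fst (M t))) * h - real n)"
proof -
  let ?S = "fst (M t)"
  have sub: "?S \<subseteq> {..<n}" using dm v by (simp add: det_mechanism_def)
  have "snd (M t) i \<le> real (card ?S) * h" if iS: "i \<in> ?S" for i
  proof -
    have i: "i < n" using sub iS by auto
    have "utility i (t i) (M t) \<ge> 0" using ir v i by (simp add: indiv_rational_def)
    hence "snd (M t) i \<le> real (card ?S) * t i" using iS by (simp add: utility_winner)
    also have "\<dots> \<le> real (card ?S) * h" using hi i by (simp add: mult_left_mono)
    finally show ?thesis .
  qed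
  hence "(\<Sum>i\<in>?S. snd (M t) i) \<le> (\<Sum>i\<in>?S. real (card ?S) * h)" by (rule sum_mono)
  thus ?thesis by (simp add: profit_cost_def algebra_simps)
qed

text \<open>Types in \<open>[0, 1 + m]\<close> with \<open>n m \<le> 1/2\<close>: a sale to \<open>k < n\<close> agents
  brings in at most \<open>k (n - 1)(1 + m) \<le> k (n - 1/2)\<close>, less than its cost \<open>k n\<close>.\<close>
lemma profit_cost_near_one:
  assumes dm: "det_mechanism n M" and ir: "indiv_rational n M" and v: "valid_profile n t"
    and hi: "\<forall>i<n. t i \<le> 1 + m" and m: "0 \<le> m" and nm: "real n * m \<le> 1/2"
  shows profit_cost_near_one_le: "profit_cost n (M t) \<le> real n * real n * m"
    and profit_cost_not_full_le:
      "\<not> full_sale n (M t) \<Longrightarrow> profit_cost n (M t) \<le> - real (card (fst (M t))) / 2"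
proof -
  let ?k = "card (fst (M t))"
  have profit: "profit_cost n (M t) \<le> real ?k * (real ?k * (1 + m) - real n)"
    by (rule profit_cost_le_card[OF dm ir v hi])
  have sub: "fst (M t) \<subseteq> {..<n}" using dm v by (simp add: det_mechanism_def)
  show not_full: "profit_cost n (M t) \<le> - real ?k / 2" if "\<not> full_sale n (M t)"
  proof -
    have "fst (M t) \<subset> {..<n}" using sub that by (auto simp: full_sale_def)
    hence "?k < n" by (metis psubset_card_mono finite_lessThan card_lessThan)
    hence "real ?k * (1 + m) \<le> (real n - 1) * (1 + m)" using m by (intro mult_right_mono) auto
    also have "\<dots> \<le> real n - 1/2" using nm m by (simp add: algebra_simps)
    finally have "real ?k * (real ?k * (1 + m) - real n) \<le> real ?k * (- 1/2)"
      by (intro mult_left_mono) auto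
    thus ?thesis using profit by simp
  qed
  show "profit_cost n (M t) \<le> real n * real n * m"
  proof (cases "full_sale n (M t)")
    case True
    hence "?k = n" by (simp add: full_sale_def)
    thus ?thesis using profit by (simp add: algebra_simps)
  next
    case False
    have "0 \<le> real n * real n * m" using m by simp
    moreover have "- real ?k / 2 \<le> 0" by simp
    ultimately show ?thesis using not_full[OF False] by linarith
  qed
qed

lemma partial_sale_indicator_le:
  assumes dm: "det_mechanism n M" and ir: "indiv_rational n M" and v: "valid_profile n t"
    and hi: "\<forall>i<n. t i \<le> 1 + m" and m: "0 \<le> m" and nm: "real n * m \<le> 1/2"
  shows "of_bool (partial_sale n (M t)) \<le> 2 * (real n * real n * m) - 2 * profit_cost n (M t)"
proof (cases "partial_sale n (M t)")
  case True
  hence "1 \<le> card (fst (M t))"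
    using finite_winners[OF dm v] by (auto simp: partial_sale_def Suc_le_eq card_gt_0_iff)
  moreover have "profit_cost n (M t) \<le> - real (card (fst (M t))) / 2"
    using True profit_cost_not_full_le[OF dm ir v hi m nm] by (simp add: partial_sale_def full_sale_def)
  ultimately have "profit_cost n (M t) \<le> -1/2" by linarith
  moreover have "0 \<le> real n * real n * m" using m by simp
  ultimately show ?thesis using True by simp
next
  case False
  thus ?thesis using profit_cost_near_one_le[OF dm ir v hi m nm] by simp
qed

lemma hybrid_profile_0 [simp]: "hybrid_profile c d 0 = c"
  by (simp add: hybrid_profile_def fun_eq_iff)

lemma hybrid_profile_Suc: "hybrid_profile c d (Suc k) = (hybrid_profile c d k)(k := d k)"
  by (auto simp: hybrid_profile_def fun_eq_iff)

lemma hybrid_profile_eq_right: "\<forall>j\<ge>n. c j = d j \<Longrightarrow> hybrid_profile c d n = d"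
  by (auto simp: hybrid_profile_def fun_eq_iff)

lemma valid_hybrid_profile:
  "valid_profile n c \<Longrightarrow> valid_profile n d \<Longrightarrow> valid_profile n (hybrid_profile c d k)"
  by (simp add: valid_profile_def hybrid_profile_def)

lemma hybrid_profile_pointwise:
  "\<forall>j<n. P (c j) \<Longrightarrow> \<forall>j<n. P (d j) \<Longrightarrow> \<forall>j<n. P (hybrid_profile c d k j)"
  by (simp add: hybrid_profile_def)

text \<open>Raising the reports one agent at a time from \<open>c\<close> to \<open>d\<close>, a full sale can only be
  lost through a partial one: the agent whose report was just raised keeps winning.\<close>
lemma full_sale_le_hybrid_partial_sales:
  assumes tr: "truthful n M" and dm: "det_mechanism n M"
    and c: "valid_profile n c" and d: "valid_profile n d" and cd: "\<forall>j. c j \<le> d j"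
    and k: "k \<le> n"
  shows "(of_bool (full_sale n (M c)) :: real) \<le> of_bool (full_sale n (M (hybrid_profile c d k)))
          + (\<Sum>j\<in>{1..k}. of_bool (partial_sale n (M (hybrid_profile c d j))))"
  using k
proof (induction k)
  case 0
  show ?case by simp
next
  case (Suc k)
  let ?h = "hybrid_profile c d"
  have "(of_bool (full_sale n (M (?h k))) :: real)
      \<le> of_bool (full_sale n (M (?h (Suc k)))) + of_bool (partial_sale n (M (?h (Suc k))))"
  proof (cases "full_sale n (M (?h k))")
    case True
    have "?h k k \<le> d k" using cd by (simp add: hybrid_profile_def)
    moreover have "k \<in> fst (M (?h k))" using True Suc.prems by (simp add: full_sale_def)
    ultimately have "k \<in> fst (M (?h (Suc k)))"
      unfolding hybrid_profile_Suc
      using truthful_winner_mono[OF tr dm valid_hybrid_profile[OF c d]] Suc.prems by simp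
    thus ?thesis by (auto simp: full_sale_def partial_sale_def)
  qed simp
  thus ?case using Suc by simp
qed

lemma full_sale_lost_le_partial_sales:
  assumes tr: "truthful n M" and dm: "det_mechanism n M"
    and c: "valid_profile n c" and d: "valid_profile n d"
    and cd: "\<forall>j. c j \<le> d j" and agree: "\<forall>j\<ge>n. c j = d j"
  shows "(of_bool (full_sale n (M c) \<and> \<not> full_sale n (M d)) :: real)
          \<le> (\<Sum>k\<in>{1..n}. of_bool (partial_sale n (M (hybrid_profile c d k))))"
  using full_sale_le_hybrid_partial_sales[OF tr dm c d cd order_refl]
  by (auto simp: hybrid_profile_eq_right[OF agree] intro: sum_nonneg)

lemma full_sale_lost_le_hybrid_profits:
  assumes tr: "truthful n M" and dm: "det_mechanism n M" and ir: "indiv_rational n M"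
    and c: "valid_profile n c" and d: "valid_profile n d"
    and cd: "\<forall>j. c j \<le> d j" and agree: "\<forall>j\<ge>n. c j = d j"
    and hi: "\<forall>j<n. d j \<le> 1 + a" and a: "0 \<le> a" and na: "real n * a \<le> 1/2"
  shows "(of_bool (full_sale n (M c) \<and> \<not> full_sale n (M d)) :: real)
          \<le> 2 * real n ^ 3 * a - 2 * (\<Sum>k\<in>{1..n}. profit_cost n (M (hybrid_profile c d k)))"
proof -
  have "\<forall>j<n. c j \<le> 1 + a" using hi cd order_trans by blast
  hence "\<forall>j<n. hybrid_profile c d k j \<le> 1 + a" for k
    using hybrid_profile_pointwise[where P = "\<lambda>x. x \<le> 1 + a"] hi by blast
  hence "(\<Sum>k\<in>{1..n}. (of_bool (partial_sale n (M (hybrid_profile c d k))) :: real))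
      \<le> (\<Sum>k\<in>{1..n}. 2 * (real n * real n * a) - 2 * profit_cost n (M (hybrid_profile c d k)))"
    using partial_sale_indicator_le[OF dm ir valid_hybrid_profile[OF c d] _ a na]
    by (intro sum_mono) blast
  also have "\<dots> = 2 * real n ^ 3 * a - 2 * (\<Sum>k\<in>{1..n}. profit_cost n (M (hybrid_profile c d k)))"
    by (simp add: sum_subtractf sum_distrib_left power3_eq_cube)
  finally show ?thesis
    using full_sale_lost_le_partial_sales[OF tr dm c d cd agree] by linarith
qed

lemma profit_cost_uniform_le:
  assumes tr: "truthful n M" and dm: "det_mechanism n M" and ir: "indiv_rational n M"
    and b: "0 \<le> b" and ba: "b \<le> a" and na: "real n * a \<le> 1/2"
  shows "profit_cost n (M (uniform_profile n (1 + a))) \<le> real n * real n * b + real n * a *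
     (\<Sum>i<n. of_bool (full_sale n (M (uniform_profile n (1 + a)))
                 \<and> \<not> full_sale n (M ((uniform_profile n (1 + a))(i := 1 + b)))))"
    (is "profit_cost n (M ?t) \<le> _ + _ * (\<Sum>i<n. of_bool (_ \<and> \<not> ?kept i))")
proof -
  have a: "0 \<le> a" using b ba by linarith
  have v: "valid_profile n ?t" using valid_uniform_profile a by simp
  have rhs_nonneg: "0 \<le> real n * real n * b + real n * a *
     (\<Sum>i<n. (of_bool (full_sale n (M ?t) \<and> \<not> ?kept i)) :: real)"
    using a b by (intro add_nonneg_nonneg mult_nonneg_nonneg sum_nonneg) auto
  show ?thesis
  proof (cases "full_sale n (M ?t)")
    case False
    have "profit_cost n (M ?t) \<le> - real (card (fst (M ?t))) / 2"
      using profit_cost_not_full_le[OF dm ir v _ a na] False by (simp add: uniform_profile_def)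
    also have "\<dots> \<le> 0" by simp
    finally show ?thesis using rhs_nonneg by linarith
  next
    case True
    have price: "snd (M ?t) i \<le> real n * (1 + b) + real n * a * of_bool (\<not> ?kept i)"
      if i: "i < n" for i
    proof (cases "?kept i")
      case True
      have "0 \<le> 1 + b" using b by simp
      from full_sale_price_le[OF tr ir v i this \<open>full_sale n (M ?t)\<close> True]
      show ?thesis using True by simp
    next
      case False
      have "utility i (?t i) (M ?t) \<ge> 0" using ir v i by (simp add: indiv_rational_def)
      hence "snd (M ?t) i \<le> real n * (1 + a)"
        using i \<open>full_sale n (M ?t)\<close> by (simp add: utility_winner full_sale_def uniform_profile_def)
      moreover have "0 \<le> real n * b" using b by simp
      ultimately show ?thesis using False by (simp add: algebra_simps)
    qed
    have "profit_cost n (M ?t) = (\<Sum>i<n. snd (M ?t) i) - real n * real n"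
      using True by (simp add: profit_cost_def full_sale_def)
    also have "\<dots> \<le> (\<Sum>i<n. real n * (1 + b) + real n * a * of_bool (\<not> ?kept i)) - real n * real n"
      using price by (intro diff_right_mono sum_mono) auto
    also have "\<dots> = real n * real n * b + real n * a * (\<Sum>i<n. of_bool (\<not> ?kept i))"
      by (simp only: sum.distrib sum_constant card_lessThan sum_distrib_left[symmetric])
        (simp add: algebra_simps)
    finally show ?thesis using True by simp
  qed
qed

text \<open>Every profit in the potential has nonnegative expectation under a competitive mechanism,
  the first one at least \<open>n / L\<close>.  The weights are chosen so that, pointwise, the full sales
  lost in \<open>profit_cost_uniform_le\<close> are paid for by the partial sales they force
  along the hybrid paths from \<open>1 + b\<close> up to \<open>1 + a\<close>.\<close>
definition potential :: "nat \<Rightarrow> mechanism \<Rightarrow> real \<Rightarrow> real \<Rightarrow> real" where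
  "potential n M b a =
     profit_cost n (M (uniform_profile n (1 + a))) / (real n * a)
     + 2 * real n * (\<Sum>k\<in>{1..n}. profit_cost n
         (M (hybrid_profile (uniform_profile n (1 + b)) (uniform_profile n (1 + a)) k)))
     + 2 * (\<Sum>i<n. \<Sum>k\<in>{1..n}. profit_cost n
         (M (hybrid_profile (uniform_profile n (1 + b)) ((uniform_profile n (1 + a))(i := 1 + b)) k)))"

lemma sum_lost_full_sales_le:
  assumes tr: "truthful n M" and dm: "det_mechanism n M" and ir: "indiv_rational n M"
    and b: "0 \<le> b" and ba: "b \<le> a" and na: "real n * a \<le> 1/2"
  shows "(\<Sum>i<n. of_bool (full_sale n (M (uniform_profile n (1 + a)))
                   \<and> \<not> full_sale n (M ((uniform_profile n (1 + a))(i := 1 + b)))))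
     \<le> real n * (of_bool (full_sale n (M (uniform_profile n (1 + a))))
                 - of_bool (full_sale n (M (uniform_profile n (1 + b)))))
       + 4 * real n ^ 4 * a
       - 2 * real n * (\<Sum>k\<in>{1..n}. profit_cost n
           (M (hybrid_profile (uniform_profile n (1 + b)) (uniform_profile n (1 + a)) k)))
       - 2 * (\<Sum>i<n. \<Sum>k\<in>{1..n}. profit_cost n
           (M (hybrid_profile (uniform_profile n (1 + b)) ((uniform_profile n (1 + a))(i := 1 + b)) k)))"
proof -
  have a: "0 \<le> a" using b ba by linarith
  define c where "c = uniform_profile n (1 + b)"
  define d where "d = uniform_profile n (1 + a)"
  define l where "l i = d(i := 1 + b)" for i
  define PU where "PU = (\<Sum>k\<in>{1..n}. profit_cost n (M (hybrid_profile c d k)))"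
  define PV where "PV i = (\<Sum>k\<in>{1..n}. profit_cost n (M (hybrid_profile c (l i) k)))" for i
  have vc: "valid_profile n c" and vd: "valid_profile n d" and vl: "valid_profile n (l i)" for i
    using a b valid_uniform_profile valid_profile_upd[OF valid_uniform_profile]
    by (simp_all add: c_def d_def l_def)
  have hd: "\<forall>j<n. d j \<le> 1 + a" and hl: "\<forall>j<n. l i j \<le> 1 + a" for i
    using ba by (simp_all add: d_def l_def uniform_profile_def)
  have lost_d: "(of_bool (full_sale n (M c) \<and> \<not> full_sale n (M d)) :: real) \<le> 2 * real n ^ 3 * a - 2 * PU"
    unfolding PU_def
    by (rule full_sale_lost_le_hybrid_profits[OF tr dm ir vc vd _ _ hd a na])
      (use ba in \<open>auto simp: c_def d_def uniform_profile_def\<close>)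
  have lost_l: "(of_bool (full_sale n (M c) \<and> \<not> full_sale n (M (l i))) :: real)
      \<le> 2 * real n ^ 3 * a - 2 * PV i" if "i < n" for i
    unfolding PV_def
    by (rule full_sale_lost_le_hybrid_profits[OF tr dm ir vc vl _ _ hl a na])
      (use ba that in \<open>auto simp: c_def d_def l_def uniform_profile_def\<close>)
  have "(of_bool (full_sale n (M d) \<and> \<not> full_sale n (M (l i))) :: real)
      \<le> (of_bool (full_sale n (M d)) - of_bool (full_sale n (M c)))
        + of_bool (full_sale n (M c) \<and> \<not> full_sale n (M d))
        + of_bool (full_sale n (M c) \<and> \<not> full_sale n (M (l i)))" for i
    by simp
  hence "(\<Sum>i<n. (of_bool (full_sale n (M d) \<and> \<not> full_sale n (M (l i))) :: real))
      \<le> (\<Sum>i<n. (of_bool (full_sale n (M d)) - of_bool (full_sale n (M c)))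
            + (2 * real n ^ 3 * a - 2 * PU) + (2 * real n ^ 3 * a - 2 * PV i))"
    using lost_d lost_l by (intro sum_mono) (smt (verit) lessThan_iff)
  also have "\<dots> = real n * (of_bool (full_sale n (M d)) - of_bool (full_sale n (M c)))
      + 4 * real n ^ 4 * a - 2 * real n * PU - 2 * (\<Sum>i<n. PV i)"
    by (simp add: sum.distrib sum_subtractf sum_distrib_left power4_eq_xxxx power3_eq_cube algebra_simps)
  finally show ?thesis by (simp add: PU_def PV_def c_def d_def l_def)
qed

lemma potential_le:
  assumes tr: "truthful n M" and dm: "det_mechanism n M" and ir: "indiv_rational n M"
    and b: "0 \<le> b" and ba: "b \<le> a" and a: "0 < a" and na: "real n * a \<le> 1/2"
  shows "potential n M b a \<le> real n * (b / a)
     + real n * (of_bool (full_sale n (M (uniform_profile n (1 + a))))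
                 - of_bool (full_sale n (M (uniform_profile n (1 + b)))))
     + 4 * real n ^ 4 * a"
proof (cases "n = 0")
  case True
  thus ?thesis by (simp add: potential_def)
next
  case False
  let ?d = "uniform_profile n (1 + a)"
  define lost :: real where
    "lost = (\<Sum>i<n. of_bool (full_sale n (M ?d) \<and> \<not> full_sale n (M (?d(i := 1 + b)))))"
  have "profit_cost n (M ?d) / (real n * a) \<le> (real n * real n * b + real n * a * lost) / (real n * a)"
    using profit_cost_uniform_le[OF tr dm ir b ba na] False a
    by (intro divide_right_mono) (simp_all add: lost_def)
  also have "\<dots> = real n * (b / a) + lost"
    using False a by (simp add: field_simps)
  finally show ?thesis
    using sum_lost_full_sales_le[OF tr dm ir b ba na] by (simp add: potential_def lost_def)
qed

lemma sum_potential_le: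
  assumes tr: "truthful n M" and dm: "det_mechanism n M" and ir: "indiv_rational n M"
    and \<rho>: "0 < \<rho>" "\<rho> \<le> 1" and m: "0 < m" and nm: "real n * m \<le> 1/2"
  shows "(\<Sum>j<K. potential n M (m * \<rho> ^ Suc j) (m * \<rho> ^ j))
           \<le> real n * real K * \<rho> + real n + 4 * real n ^ 4 * real K * m"
proof -
  define a where "a j = m * \<rho> ^ j" for j
  define full :: "nat \<Rightarrow> real" where "full j = of_bool (full_sale n (M (uniform_profile n (1 + a j))))" for j
  have a_pos: "0 < a j" and a_le: "a j \<le> m" for j
    using \<rho> m by (simp_all add: a_def mult_left_le power_le_one)
  have a_Suc: "a (Suc j) = \<rho> * a j" for j by (simp add: a_def)
  have "potential n M (a (Suc j)) (a j) \<le> real n * \<rho> + real n * (full j - full (Suc j)) + 4 * real n ^ 4 * m"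
    for j
  proof -
    have le: "a (Suc j) \<le> a j" using a_Suc a_pos \<rho> by (simp add: mult_left_le_one_le)
    have na: "real n * a j \<le> 1/2" using nm a_le mult_left_mono[of "a j" m "real n"] by simp
    have ratio: "a (Suc j) / a j = \<rho>" using a_Suc a_pos[of j] by simp
    from potential_le[OF tr dm ir less_imp_le[OF a_pos] le a_pos na]
    have "potential n M (a (Suc j)) (a j)
        \<le> real n * \<rho> + real n * (full j - full (Suc j)) + 4 * real n ^ 4 * a j"
      unfolding full_def ratio .
    also have "\<dots> \<le> real n * \<rho> + real n * (full j - full (Suc j)) + 4 * real n ^ 4 * m"
      using a_le[of j] by (simp add: mult_left_mono)
    finally show ?thesis .
  qed
  hence "(\<Sum>j<K. potential n M (a (Suc j)) (a j))
      \<le> (\<Sum>j<K. real n * \<rho> + real n * (full j - full (Suc j)) + 4 * real n ^ 4 * m)"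
    by (rule sum_mono)
  also have "\<dots> = real K * (real n * \<rho>) + real n * (full 0 - full K) + real K * (4 * real n ^ 4 * m)"
    by (simp add: sum.distrib sum_distrib_left[symmetric] sum_lessThan_telescope')
  also have "\<dots> \<le> real n * real K * \<rho> + real n + 4 * real n ^ 4 * real K * m"
    by (simp add: full_def)
  finally show ?thesis by (simp add: a_def)
qed

lemma F3_cost_bdd_above:
  assumes v: "valid_profile n t"
  shows "bdd_above {(c - real n) * real (card S) | c S.
       c \<ge> 0 \<and> S \<subseteq> {..<n} \<and> card S \<ge> 3 \<and> (\<forall>i\<in>S. valuation i (t i) S \<ge> c)}"
proof (rule bdd_aboveI[where M = "real n * real n * (\<Sum>j<n. t j)"])
  fix x assume "x \<in> {(c - real n) * real (card S) | c S.
       c \<ge> 0 \<and> S \<subseteq> {..<n} \<and> card S \<ge> 3 \<and> (\<forall>i\<in>S. valuation i (t i) S \<ge> c)}"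
  then obtain c S where x: "x = (c - real n) * real (card S)"
    and S: "S \<subseteq> {..<n}" "card S \<ge> 3" and val: "\<forall>i\<in>S. valuation i (t i) S \<ge> c"
    by blast
  obtain i where i: "i \<in> S" using S by fastforce
  have "i < n" and "card S \<le> n" using i S card_mono[OF finite_lessThan] by auto
  have ti: "0 \<le> t i" using v \<open>i < n\<close> by (simp add: valid_profile_def)
  have "x = c * real (card S) - real n * real (card S)" using x by (simp add: left_diff_distrib)
  also have "\<dots> \<le> c * real (card S)" by simp
  also have "\<dots> \<le> (real (card S) * t i) * real (card S)"
    using val i by (intro mult_right_mono) (auto simp: valuation_def)
  also have "\<dots> \<le> (real n * t i) * real n"
    using \<open>card S \<le> n\<close> ti by (intro mult_mono) (auto intro: mult_right_mono)
  also have "\<dots> \<le> real n * real n * (\<Sum>j<n. t j)"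
    using v \<open>i < n\<close> member_le_sum[of i "{..<n}" t]
    by (simp add: valid_profile_def mult_left_mono algebra_simps)
  finally show "x \<le> real n * real n * (\<Sum>j<n. t j)" .
qed

lemma F3_cost_ge:
  assumes v: "valid_profile n t" and "c \<ge> 0" "S \<subseteq> {..<n}" "card S \<ge> 3"
    "\<forall>i\<in>S. valuation i (t i) S \<ge> c"
  shows "(c - real n) * real (card S) \<le> F3_cost n t"
  unfolding F3_cost_def
  by (rule cSup_upper) (use assms F3_cost_bdd_above[OF v] in blast)+

lemma F3_cost_nonneg:
  assumes "valid_profile n t" and "3 \<le> n" and "\<forall>j<n. 1 \<le> t j"
  shows "0 \<le> F3_cost n t"
  using F3_cost_ge[of n t "real n" "{..<n}"] assms by (simp add: valuation_def)

lemma F3_cost_uniform_ge: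
  assumes "0 \<le> a" and "3 \<le> n"
  shows "real n * real n * a \<le> F3_cost n (uniform_profile n (1 + a))"
proof -
  have "(real n * (1 + a) - real n) * real (card {..<n}) \<le> F3_cost n (uniform_profile n (1 + a))"
    using assms by (intro F3_cost_ge valid_uniform_profile) (auto simp: valuation_def uniform_profile_def)
  thus ?thesis by (simp add: algebra_simps)
qed

lemma expected_profit_cost_nonneg:
  assumes n: "3 \<le> n" and L: "0 < L"
    and competitive: "\<forall>t. valid_profile n t \<longrightarrow>
           integrable \<Omega> (\<lambda>\<omega>. profit_cost n (mech \<omega> t)) \<and>
           (\<integral>\<omega>. profit_cost n (mech \<omega> t) \<partial>\<Omega>) \<ge> F3_cost n t / L"
    and v: "valid_profile n t" and ge1: "\<forall>j<n. 1 \<le> t j"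
  shows "0 \<le> (\<integral>\<omega>. profit_cost n (mech \<omega> t) \<partial>\<Omega>)"
proof -
  have "0 \<le> F3_cost n t / L" using F3_cost_nonneg[OF v n ge1] L by simp
  also have "\<dots> \<le> (\<integral>\<omega>. profit_cost n (mech \<omega> t) \<partial>\<Omega>)" using competitive v by simp
  finally show ?thesis .
qed

lemma expected_potential_ge:
  fixes \<Omega> :: "'w measure" and mech :: "'w \<Rightarrow> mechanism"
  assumes "prob_space \<Omega>" and n: "3 \<le> n" and L: "0 < L" and b: "0 \<le> b" and a: "0 < a"
    and competitive: "\<forall>t. valid_profile n t \<longrightarrow>
           integrable \<Omega> (\<lambda>\<omega>. profit_cost n (mech \<omega> t)) \<and>
           (\<integral>\<omega>. profit_cost n (mech \<omega> t) \<partial>\<Omega>) \<ge> F3_cost n t / L"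
  shows "integrable \<Omega> (\<lambda>\<omega>. potential n (mech \<omega>) b a)"
    and "real n / L \<le> (\<integral>\<omega>. potential n (mech \<omega>) b a \<partial>\<Omega>)"
proof -
  interpret prob_space \<Omega> by fact
  define P where "P t = (\<lambda>\<omega>. profit_cost n (mech \<omega> t))" for t
  define c where "c = uniform_profile n (1 + b)"
  define d where "d = uniform_profile n (1 + a)"
  define l where "l i = d(i := 1 + b)" for i
  have int: "integrable \<Omega> (P t)" if "valid_profile n t" for t
    using competitive that by (simp add: P_def)
  note nonneg = expected_profit_cost_nonneg[OF n L competitive, folded P_def]
  have vc: "valid_profile n c" and vd: "valid_profile n d" and vl: "valid_profile n (l i)" for i
    using a b valid_uniform_profile valid_profile_upd[OF valid_uniform_profile]
    by (simp_all add: c_def d_def l_def)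
  have gc: "\<forall>j<n. 1 \<le> c j" and gd: "\<forall>j<n. 1 \<le> d j" and gl: "\<forall>j<n. 1 \<le> l i j" for i
    using a b by (simp_all add: c_def d_def l_def uniform_profile_def)
  note hybrid_ge_1 = hybrid_profile_pointwise[where P = "\<lambda>x. 1 \<le> x"]
  have int_U: "integrable \<Omega> (P (hybrid_profile c d k))"
    and int_V: "integrable \<Omega> (P (hybrid_profile c (l i) k))" for i k
    using int[OF valid_hybrid_profile[OF vc vd]] int[OF valid_hybrid_profile[OF vc vl]] .
  have E_U: "0 \<le> integral\<^sup>L \<Omega> (P (hybrid_profile c d k))"
    and E_V: "0 \<le> integral\<^sup>L \<Omega> (P (hybrid_profile c (l i) k))" for i k
    using nonneg[OF valid_hybrid_profile[OF vc vd] hybrid_ge_1[OF gc gd]]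
      nonneg[OF valid_hybrid_profile[OF vc vl] hybrid_ge_1[OF gc gl]] .
  have pot: "(\<lambda>\<omega>. potential n (mech \<omega>) b a) = (\<lambda>\<omega>. P d \<omega> / (real n * a)
      + 2 * real n * (\<Sum>k\<in>{1..n}. P (hybrid_profile c d k) \<omega>)
      + 2 * (\<Sum>i<n. \<Sum>k\<in>{1..n}. P (hybrid_profile c (l i) k) \<omega>))"
    by (simp add: potential_def P_def c_def d_def l_def)
  show "integrable \<Omega> (\<lambda>\<omega>. potential n (mech \<omega>) b a)"
    unfolding pot using int[OF vd] int_U int_V by simp
  have "real n / L = (real n * real n * a / L) / (real n * a)"
    using n a by (simp add: field_simps)
  also have "\<dots> \<le> integral\<^sup>L \<Omega> (P d) / (real n * a)"
  proof (rule divide_right_mono)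
    have "real n * real n * a / L \<le> F3_cost n d / L"
      using F3_cost_uniform_ge[OF less_imp_le[OF a] n] L by (simp add: d_def divide_right_mono)
    also have "\<dots> \<le> integral\<^sup>L \<Omega> (P d)" using competitive vd by (simp add: P_def)
    finally show "real n * real n * a / L \<le> integral\<^sup>L \<Omega> (P d)" .
  qed (use a in simp)
  also have "\<dots> \<le> integral\<^sup>L \<Omega> (P d) / (real n * a)
      + 2 * real n * (\<Sum>k\<in>{1..n}. integral\<^sup>L \<Omega> (P (hybrid_profile c d k)))
      + 2 * (\<Sum>i<n. \<Sum>k\<in>{1..n}. integral\<^sup>L \<Omega> (P (hybrid_profile c (l i) k)))"
    using E_U E_V by (simp add: sum_nonneg)
  also have "\<dots> = (\<integral>\<omega>. potential n (mech \<omega>) b a \<partial>\<Omega>)"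
    unfolding pot using int[OF vd] int_U int_V by (simp add: Bochner_Integration.integral_sum)
  finally show "real n / L \<le> (\<integral>\<omega>. potential n (mech \<omega>) b a \<partial>\<Omega>)" .
qed

theorem claim2:
  fixes n :: nat and L :: real
    and \<Omega> :: "'w measure" and mech :: "'w \<Rightarrow> mechanism"
  assumes "n \<ge> 4" and "L \<ge> 1"
    and "prob_space \<Omega>"
    and "\<forall>\<omega>\<in>space \<Omega>. det_mechanism n (mech \<omega>) \<and> truthful n (mech \<omega>)
                         \<and> indiv_rational n (mech \<omega>)"
    and "\<forall>t. valid_profile n t \<longrightarrow>
           integrable \<Omega> (\<lambda>\<omega>. profit_cost n (mech \<omega> t)) \<and>
           (\<integral>\<omega>. profit_cost n (mech \<omega> t) \<partial>\<Omega>) \<ge> F3_cost n t / L"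
  shows False
proof -
  interpret prob_space \<Omega> by fact
  obtain K :: nat where K: "4 * L < real K" using reals_Archimedean2 by blast
  define \<rho> where "\<rho> = 1 / (2 * L)"
  define m where "m = 1 / (4 * real n ^ 3 * real K)"
  define \<Phi> where "\<Phi> = (\<lambda>\<omega>. \<Sum>j<K. potential n (mech \<omega>) (m * \<rho> ^ Suc j) (m * \<rho> ^ j))"
  have n: "0 < real n" "3 \<le> n" and L: "0 < L" and K_pos: "0 < real K" using assms(1,2) K by auto
  have \<rho>: "0 < \<rho>" "\<rho> \<le> 1" using assms(2) by (auto simp: \<rho>_def field_simps)
  have m: "0 < m" using n K_pos by (simp add: m_def)
  have "1 \<le> real n ^ 2" and "1 \<le> real K" using assms(1) K_pos by (simp_all add: one_le_power)
  hence "1 \<le> real n ^ 2 * real K" using mult_mono[of 1 "real n ^ 2" 1 "real K"] by simp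
  hence nm: "real n * m \<le> 1/2" using n by (simp add: m_def field_simps power3_eq_cube power2_eq_square)
  define X where "X = real K * (real n / L)"
  note expected = expected_potential_ge[OF assms(3) n(2) L _ _ assms(5)]
  have int: "integrable \<Omega> \<Phi>" using expected(1) m \<rho> by (simp add: \<Phi>_def)
  have "X = (\<Sum>j<K. real n / L)" by (simp add: X_def)
  also have "\<dots> \<le> (\<Sum>j<K. \<integral>\<omega>. potential n (mech \<omega>) (m * \<rho> ^ Suc j) (m * \<rho> ^ j) \<partial>\<Omega>)"
    using m \<rho> by (intro sum_mono expected(2)) auto
  also have "\<dots> = integral\<^sup>L \<Omega> \<Phi>"
    unfolding \<Phi>_def using m \<rho> by (simp add: expected(1))
  finally have lower: "X \<le> integral\<^sup>L \<Omega> \<Phi>" .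
  have "\<Phi> \<omega> \<le> real n * real K * \<rho> + real n + 4 * real n ^ 4 * real K * m" if "\<omega> \<in> space \<Omega>" for \<omega>
    using sum_potential_le \<rho> m nm assms(4) that unfolding \<Phi>_def by blast
  hence "integral\<^sup>L \<Omega> \<Phi> \<le> real n * real K * \<rho> + real n + 4 * real n ^ 4 * real K * m"
    using int by (intro integral_le_const) (auto simp: AE_I2)
  also have "\<dots> = X / 2 + 2 * real n"
    using n K_pos L by (simp add: X_def \<rho>_def m_def field_simps power4_eq_xxxx power3_eq_cube)
  finally have "X \<le> 4 * real n" using lower by linarith
  moreover have "real n * (4 * L) < real n * real K" using K n by simp
  ultimately show False using L by (simp add: X_def field_simps)
qed

end
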